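(* Let $m,n\geq2$ and let $V\subset[m]\times[n]$ with $|V|=m+n-1$. Then $V$ is a tree if and only if $\det(\mathfrak A(V))\neq0$.
   Context: Write $V=\phi(S)$ with $S=\{i_1<\dots<i_{m+n-1}\}\subset[mn]$, where $\phi(i)=(t,r)$ for $i=(t-1)n+r$, $t\in[m]$, $r\in[n]$. The structure matrix $\mathfrak A(V)=(a_{s,k})$ is the $(m+n-1)\times(m+n-1)$ matrix with, for $\phi(i_k)=(t,r)$: $a_{s,k}=1$ if $s=t<m$; $a_{s,k}=1$ if $s=m$; $a_{s,k}=1$ if $s=m+r<m+n$; $a_{s,k}=0$ otherwise. Graph notions on $[m]\times[n]$: distinct points adjacent iff they share a row or column; a circuit is a cyclic sequence $v_0,\dots,v_{s-1}$ ($s\ge4$) of pairwise distinct points $v_k=(i_k,j_k)$ with (indices mod $s$) $v_k,v_{k+1}$ adjacent and $(i_{k+2}-i_k)(j_{k+2}-j_k)\neq0$ for all $k$; a tree is a connected subset (any two points joined by a path of adjacent points in it) containing no circuit. *)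

theory Defs
  imports "Jordan_Normal_Form.Determinant"
begin

text \<open>Points of the grid [m] x [n] are pairs (t, r) of naturals, 1-based.\<close>

definition phi :: "nat \<Rightarrow> nat \<Rightarrow> nat \<times> nat" where
  "phi n i = ((i - 1) div n + 1, (i - 1) mod n + 1)"

definition phi_inv :: "nat \<Rightarrow> nat \<times> nat \<Rightarrow> nat" where
  "phi_inv n p = (fst p - 1) * n + snd p"

definition grid :: "nat \<Rightarrow> nat \<Rightarrow> (nat \<times> nat) set" where
  "grid m n = {1..m} \<times> {1..n}"

text \<open>The index set S with V = phi(S); i_k is the k-th smallest element (k 0-based here).\<close>
definition idx_set :: "nat \<Rightarrow> (nat \<times> nat) set \<Rightarrow> nat set" where
  "idx_set n V = phi_inv n ` V"

definition structure_matrix :: "nat \<Rightarrow> nat \<Rightarrow> (nat \<times> nat) set \<Rightarrow> int mat" where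
  "structure_matrix m n V =
     mat (m + n - 1) (m + n - 1)
       (\<lambda>(s0, k). let s = s0 + 1;
                      tr = phi n (sorted_list_of_set (idx_set n V) ! k);
                      t = fst tr; r = snd tr
                  in if (s = t \<and> t < m) \<or> s = m \<or> (s = m + r \<and> m + r < m + n)
                     then 1 else 0)"

definition adjacent :: "nat \<times> nat \<Rightarrow> nat \<times> nat \<Rightarrow> bool" where
  "adjacent p q \<longleftrightarrow> p \<noteq> q \<and> (fst p = fst q \<or> snd p = snd q)"

definition is_circuit_in :: "(nat \<times> nat) set \<Rightarrow> nat \<Rightarrow> (nat \<Rightarrow> nat \<times> nat) \<Rightarrow> bool" where
  "is_circuit_in V s v \<longleftrightarrow> s \<ge> 4 \<and> (\<forall>k<s. v k \<in> V) \<and> inj_on v {..<s} \<and>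
     (\<forall>k<s. adjacent (v k) (v ((k + 1) mod s)) \<and>
        (int (fst (v ((k + 2) mod s))) - int (fst (v k))) *
        (int (snd (v ((k + 2) mod s))) - int (snd (v k))) \<noteq> 0)"

definition connected_set :: "(nat \<times> nat) set \<Rightarrow> bool" where
  "connected_set V \<longleftrightarrow> (\<forall>p\<in>V. \<forall>q\<in>V. \<exists>xs. xs \<noteq> [] \<and> hd xs = p \<and> last xs = q \<and>
       set xs \<subseteq> V \<and> (\<forall>i. Suc i < length xs \<longrightarrow> adjacent (xs ! i) (xs ! Suc i)))"

definition is_tree :: "(nat \<times> nat) set \<Rightarrow> bool" where
  "is_tree V \<longleftrightarrow> connected_set V \<and> \<not> (\<exists>s v. is_circuit_in V s v)"

end

theory Submission
  imports Defs
begin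

text \<open>
  Index the rows of \<open>\<AA>(V)\<close> by grid lines (the rows \<open>1..m-1\<close>, the whole grid, the columns
  \<open>1..n-1\<close>) and its columns by the points of \<open>V\<close>. A kernel vector of \<open>\<AA>(V)\<close> is then a weighting
  of \<open>V\<close> whose row and column sums all vanish. In the support of a nonzero such weighting every
  point shares a row and a column with further points of the support, so a walk alternating
  between rows and columns closes up into a circuit; conversely, signs \<open>\<plusminus>1\<close> alternating along
  a circuit give such a weighting. Hence \<open>V\<close> contains a circuit iff \<open>det \<AA>(V) = 0\<close>. Finally, if
  \<open>V\<close> is disconnected, the rows and columns met by one component give a nonzero vector in the
  left kernel of \<open>\<AA>(V)\<close>, so \<open>det \<AA>(V) \<noteq> 0\<close> also forces connectedness.
\<close>

section \<open>Circuits from alternating walks\<close>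

lemma alternating_cycle_is_circuit:
  fixes v :: "nat \<Rightarrow> nat \<times> nat"
  assumes "even s" and "s \<ge> 2" and inj: "inj_on v {..<s}" and "v ` {..<s} \<subseteq> V"
    and alt: "\<forall>k<s. if even (c + k) then fst (v k) = fst (v ((k + 1) mod s))
                                   else snd (v k) = snd (v ((k + 1) mod s))"
  shows "is_circuit_in V s v"
proof -
  have next_ne: "v ((k + 1) mod s) \<noteq> v k" if "k < s" for k
  proof -
    have "(k + 1) mod s \<noteq> k"
      using that \<open>s \<ge> 2\<close> by (cases "k + 1 = s") auto
    then show ?thesis
      using inj that \<open>s \<ge> 2\<close> by (simp add: inj_on_eq_iff)
  qed
  have step: "adjacent (v k) (v ((k + 1) mod s)) \<and>
      (int (fst (v ((k + 2) mod s))) - int (fst (v k))) *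
      (int (snd (v ((k + 2) mod s))) - int (snd (v k))) \<noteq> 0" if k: "k < s" for k
  proof -
    define k' where "k' = (k + 1) mod s"
    have k': "k' < s" "(k + 2) mod s = (k' + 1) mod s"
      using \<open>s \<ge> 2\<close> by (simp_all add: k'_def mod_Suc_eq)
    have flip: "even (c + k') \<longleftrightarrow> odd (c + k)"
      using k \<open>even s\<close> by (cases "k + 1 = s") (auto simp: k'_def)
    have alt_k: "if even (c + k) then fst (v k) = fst (v k') else snd (v k) = snd (v k')"
      using alt k by (simp add: k'_def)
    have alt_k': "if even (c + k') then fst (v k') = fst (v ((k' + 1) mod s))
                  else snd (v k') = snd (v ((k' + 1) mod s))"
      using alt k'(1) by blast
    have "v k' \<noteq> v k" "v ((k' + 1) mod s) \<noteq> v k'"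
      using next_ne k k'(1) by (simp_all add: k'_def)
    then show ?thesis
      using alt_k alt_k' flip unfolding k'(2) k'_def[symmetric] adjacent_def
      by (cases "even (c + k)") (auto simp: prod_eq_iff simp del: even_add)
  qed
  have "s \<noteq> 2"
  proof
    assume "s = 2"
    then show False
      using alt next_ne[of 0] by (cases "even c") (auto simp: prod_eq_iff)
  qed
  with \<open>even s\<close> \<open>s \<ge> 2\<close> have "s \<ge> 4"
    by (auto elim!: evenE)
  then show ?thesis
    unfolding is_circuit_in_def using step inj \<open>v ` {..<s} \<subseteq> V\<close> by blast
qed

definition alternating_walk :: "(nat \<Rightarrow> nat \<times> nat) \<Rightarrow> bool" where
  "alternating_walk f \<longleftrightarrow> (\<forall>i. f (Suc i) \<noteq> f i \<and>
     (if even i then fst (f (Suc i)) = fst (f i) else snd (f (Suc i)) = snd (f i)))"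

lemma circuit_of_alternating_segment:
  assumes walk: "alternating_walk f" and "a < b" and "odd (b - a)"
    and inj: "inj_on f {a..b}" and "f ` {a..b} \<subseteq> V"
    and closing: "if even b then fst (f b) = fst (f a) else snd (f b) = snd (f a)"
  shows "is_circuit_in V (Suc b - a) (\<lambda>k. f (a + k))"
proof (rule alternating_cycle_is_circuit[where c = a])
  show "even (Suc b - a)" "Suc b - a \<ge> 2"
    using \<open>a < b\<close> \<open>odd (b - a)\<close> by presburger+
  show "inj_on (\<lambda>k. f (a + k)) {..<Suc b - a}"
    using inj by (intro inj_onI) (auto dest: inj_onD)
  show "(\<lambda>k. f (a + k)) ` {..<Suc b - a} \<subseteq> V"
    using \<open>f ` {a..b} \<subseteq> V\<close> by auto
  show "\<forall>k<Suc b - a. if even (a + k) then fst (f (a + k)) = fst (f (a + (k + 1) mod (Suc b - a)))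
             else snd (f (a + k)) = snd (f (a + (k + 1) mod (Suc b - a)))"
  proof (intro allI impI)
    fix k assume k: "k < Suc b - a"
    show "if even (a + k) then fst (f (a + k)) = fst (f (a + (k + 1) mod (Suc b - a)))
          else snd (f (a + k)) = snd (f (a + (k + 1) mod (Suc b - a)))"
    proof (cases "a + k = b")
      case True
      then have "Suc b - a = k + 1"
        by simp
      then show ?thesis
        using closing True by simp
    next
      case False
      with k have "a + (k + 1) mod (Suc b - a) = Suc (a + k)"
        by simp
      moreover have "if even (a + k) then fst (f (Suc (a + k))) = fst (f (a + k))
                     else snd (f (Suc (a + k))) = snd (f (a + k))"
        using walk unfolding alternating_walk_def by blast
      ultimately show ?thesis
        by (simp split: if_splits)
    qed
  qed
qed

lemma circuit_of_alternating_walk: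
  assumes walk: "alternating_walk f" and "i < j" and "f i = f j"
    and inj: "inj_on f {i..<j}" and "f ` {i..<j} \<subseteq> V"
  shows "\<exists>s v. is_circuit_in V s v"
  \<comment> \<open>A closed segment of odd length does not alternate all the way round; dropping its first
    point repairs this, since both neighbours of that point share with it a line of the same kind.\<close>
proof -
  have step: "if even i' then fst (f (Suc i')) = fst (f i') else snd (f (Suc i')) = snd (f i')"
    for i'
    using walk unfolding alternating_walk_def by blast
  obtain j' where j': "j = Suc j'"
    using \<open>i < j\<close> by (cases j) auto
  have "f (Suc i) \<noteq> f i"
    using walk by (simp add: alternating_walk_def)
  with \<open>f i = f j\<close> have "j \<noteq> Suc i"
    by auto
  have seg: "{a..j'} \<subseteq> {i..<j}" if "i \<le> a" for a
    using that j' by auto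
  have inj': "inj_on f {a..j'}" if "i \<le> a" for a
    using inj_on_subset[OF inj seg[OF that]] .
  have sub: "f ` {a..j'} \<subseteq> V" if "i \<le> a" for a
    using image_mono[OF seg[OF that]] \<open>f ` {i..<j} \<subseteq> V\<close> by (rule order_trans)
  show ?thesis
  proof (cases "even (j - i)")
    case True
    have "i < j'" "odd (j' - i)"
      using True \<open>i < j\<close> \<open>j \<noteq> Suc i\<close> j' by presburger+
    moreover have "if even j' then fst (f j') = fst (f i) else snd (f j') = snd (f i)"
      using step[of j'] unfolding \<open>f i = f j\<close> j' by simp
    ultimately have "is_circuit_in V (Suc j' - i) (\<lambda>k. f (i + k))"
      using circuit_of_alternating_segment[OF walk _ _ inj'[OF order_refl] sub[OF order_refl]]
      by blast
    then show ?thesis by blast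
  next
    case False
    have "Suc i < j'" "odd (j' - Suc i)" "even j' \<longleftrightarrow> even i"
      using False \<open>i < j\<close> \<open>j \<noteq> Suc i\<close> j' by presburger+
    moreover have "if even j' then fst (f j') = fst (f (Suc i)) else snd (f j') = snd (f (Suc i))"
      using step[of j'] step[of i] \<open>even j' \<longleftrightarrow> even i\<close> unfolding \<open>f i = f j\<close> j'
      by (cases "even i") simp_all
    ultimately have "is_circuit_in V (Suc j' - Suc i) (\<lambda>k. f (Suc i + k))"
      using circuit_of_alternating_segment[OF walk _ _ inj'[OF le_SucI] sub[OF le_SucI]] by blast
    then show ?thesis by blast
  qed
qed

lemma circuit_of_doubled_lines:
  assumes "finite W" and "p0 \<in> W" and "W \<subseteq> V"
    and row: "\<forall>p\<in>W. \<exists>q\<in>W. q \<noteq> p \<and> fst q = fst p"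
    and col: "\<forall>p\<in>W. \<exists>q\<in>W. q \<noteq> p \<and> snd q = snd p"
  shows "\<exists>s v. is_circuit_in V s v"
proof -
  obtain rn where rn: "\<forall>p\<in>W. rn p \<in> W \<and> rn p \<noteq> p \<and> fst (rn p) = fst p"
    using row by metis
  obtain cn where cn: "\<forall>p\<in>W. cn p \<in> W \<and> cn p \<noteq> p \<and> snd (cn p) = snd p"
    using col by metis
  \<comment> \<open>Walk inside \<open>W\<close> alternately along rows and columns; its first repetition closes a circuit.\<close>
  define f where "f = rec_nat p0 (\<lambda>i p. if even i then rn p else cn p)"
  have f_0: "f 0 = p0" and f_Suc: "f (Suc i) = (if even i then rn (f i) else cn (f i))" for i
    by (simp_all add: f_def)
  have f_in: "f i \<in> W" for i
    using \<open>p0 \<in> W\<close> rn cn by (induction i) (auto simp: f_0 f_Suc)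
  have walk: "alternating_walk f"
    unfolding alternating_walk_def using rn cn f_in by (auto simp: f_Suc)
  have "card (f ` {..card W}) \<le> card W"
    using f_in \<open>finite W\<close> by (intro card_mono) auto
  then have "\<not> inj_on f {..card W}"
    by (intro pigeonhole) simp
  then have "\<exists>j. \<exists>i<j. f i = f j"
    unfolding inj_on_def by (metis linorder_neqE_nat)
  then obtain j where "\<exists>i<j. f i = f j" and first: "\<forall>j'<j. \<forall>i<j'. f i \<noteq> f j'"
    unfolding exists_least_iff[of "\<lambda>j. \<exists>i<j. f i = f j"] by blast
  then obtain i where "i < j" "f i = f j"
    by blast
  have "inj_on f {i..<j}"
    using first by (intro inj_onI) (metis atLeastLessThan_iff linorder_neqE_nat)
  moreover have "f ` {i..<j} \<subseteq> V"
    using f_in \<open>W \<subseteq> V\<close> by auto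
  ultimately show ?thesis
    using circuit_of_alternating_walk[OF walk \<open>i < j\<close> \<open>f i = f j\<close>] by blast
qed

section \<open>Line-balanced weights\<close>

definition line_balanced :: "(nat \<times> nat) set \<Rightarrow> (nat \<times> nat \<Rightarrow> int) \<Rightarrow> bool" where
  "line_balanced V w \<longleftrightarrow>
     (\<forall>t. (\<Sum>p\<in>{p\<in>V. fst p = t}. w p) = 0) \<and> (\<forall>r. (\<Sum>p\<in>{p\<in>V. snd p = r}. w p) = 0)"

lemma circuit_of_line_balanced:
  assumes "finite V" and "line_balanced V w" and "p \<in> V" and "w p \<noteq> 0"
  shows "\<exists>s v. is_circuit_in V s v"
proof -
  define W where "W = {p\<in>V. w p \<noteq> 0}"
  have other: "\<exists>q\<in>W. q \<noteq> p \<and> g q = g p" if "p \<in> W" and "(\<Sum>q\<in>{q\<in>V. g q = g p}. w q) = 0"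
    for p and g :: "nat \<times> nat \<Rightarrow> nat"
  proof (rule ccontr)
    assume "\<not> ?thesis"
    then have "(\<Sum>q\<in>{q\<in>V. g q = g p}. w q) = w p"
      using \<open>finite V\<close> \<open>p \<in> W\<close>
      by (subst sum.remove[of _ p]) (auto simp: W_def intro!: sum.neutral)
    then show False
      using that by (simp add: W_def)
  qed
  have "\<forall>p\<in>W. \<exists>q\<in>W. q \<noteq> p \<and> fst q = fst p" "\<forall>p\<in>W. \<exists>q\<in>W. q \<noteq> p \<and> snd q = snd p"
    using other \<open>line_balanced V w\<close> unfolding line_balanced_def by blast+
  moreover have "finite W" "p \<in> W" "W \<subseteq> V"
    using assms by (auto simp: W_def)
  ultimately show ?thesis
    using circuit_of_doubled_lines by blast
qed

lemma card_alternating_split: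
  fixes P Q :: "nat \<Rightarrow> bool"
  assumes "0 < s"
    and alt: "\<forall>k<s. Q ((k + 1) mod s) \<longleftrightarrow> \<not> Q k"
    and keep: "\<forall>k<s. Q k \<longrightarrow> (P ((k + 1) mod s) \<longleftrightarrow> P k)"
  shows "card {k. k < s \<and> P k \<and> Q k} = card {k. k < s \<and> P k \<and> \<not> Q k}"
proof (rule bij_betw_same_card)
  let ?succ = "\<lambda>k. (k + 1) mod s" and ?pred = "\<lambda>k. (k + s - 1) mod s"
  have pred: "?pred k < s" "?succ (?pred k) = k" if "k < s" for k
    using that by (simp_all add: mod_Suc_eq)
  show "bij_betw ?succ {k. k < s \<and> P k \<and> Q k} {k. k < s \<and> P k \<and> \<not> Q k}"
  proof (rule bij_betw_byWitness[where f' = ?pred])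
    have "?pred (?succ k) = k" if "k < s" for k
      using that by (cases "Suc k = s") auto
    then show "\<forall>k\<in>{k. k < s \<and> P k \<and> Q k}. ?pred (?succ k) = k"
      by blast
    show "\<forall>k\<in>{k. k < s \<and> P k \<and> \<not> Q k}. ?succ (?pred k) = k"
      using pred by blast
    show "?succ ` {k. k < s \<and> P k \<and> Q k} \<subseteq> {k. k < s \<and> P k \<and> \<not> Q k}"
      using alt keep \<open>0 < s\<close> by auto
    show "?pred ` {k. k < s \<and> P k \<and> \<not> Q k} \<subseteq> {k. k < s \<and> P k \<and> Q k}"
    proof
      fix x assume "x \<in> ?pred ` {k. k < s \<and> P k \<and> \<not> Q k}"
      then obtain k where k: "k < s" "P k" "\<not> Q k" and "x = ?pred k"
        by blast
      then have "x < s" "?succ x = k"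
        using pred by auto
      then show "x \<in> {k. k < s \<and> P k \<and> Q k}"
        using alt keep k by auto
    qed
  qed
qed

lemma is_circuit_in_steps_alternate:
  assumes "is_circuit_in V s v" and "k < s"
  shows "fst (v ((k + 1) mod s)) = fst (v ((k + 2) mod s)) \<longleftrightarrow> fst (v k) \<noteq> fst (v ((k + 1) mod s))"
    and "fst (v k) \<noteq> fst (v ((k + 1) mod s)) \<Longrightarrow> snd (v k) = snd (v ((k + 1) mod s))"
proof -
  have adj: "\<forall>k<s. adjacent (v k) (v ((k + 1) mod s))"
    and turn: "(int (fst (v ((k + 2) mod s))) - int (fst (v k))) *
               (int (snd (v ((k + 2) mod s))) - int (snd (v k))) \<noteq> 0"
    using assms unfolding is_circuit_in_def by auto
  have "(k + 1) mod s < s" "(k + 2) mod s = ((k + 1) mod s + 1) mod s"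
    using \<open>k < s\<close> by (simp_all add: mod_Suc_eq)
  then have "adjacent (v k) (v ((k + 1) mod s))" "adjacent (v ((k + 1) mod s)) (v ((k + 2) mod s))"
    using adj \<open>k < s\<close> by auto
  then show "fst (v ((k + 1) mod s)) = fst (v ((k + 2) mod s)) \<longleftrightarrow> fst (v k) \<noteq> fst (v ((k + 1) mod s))"
    and "fst (v k) \<noteq> fst (v ((k + 1) mod s)) \<Longrightarrow> snd (v k) = snd (v ((k + 1) mod s))"
    using turn unfolding adjacent_def by (auto simp: prod_eq_iff)
qed

lemma line_balanced_weight_of_circuit:
  assumes "finite V" and circuit: "is_circuit_in V s v"
  shows "\<exists>w. line_balanced V w \<and> (\<exists>p\<in>V. w p \<noteq> 0)"
proof -
  have "0 < s" and in_V: "\<forall>k<s. v k \<in> V" and inj: "inj_on v {..<s}"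
    using circuit unfolding is_circuit_in_def by auto
  define R where "R k \<longleftrightarrow> fst (v k) = fst (v ((k + 1) mod s))" for k
  have alt: "\<forall>k<s. R ((k + 1) mod s) \<longleftrightarrow> \<not> R k"
    using is_circuit_in_steps_alternate(1)[OF circuit] by (simp add: R_def mod_Suc_eq)
  have col_step: "\<forall>k<s. \<not> R k \<longrightarrow> snd (v k) = snd (v ((k + 1) mod s))"
    using is_circuit_in_steps_alternate(2)[OF circuit] by (simp add: R_def)
  define w where "w p = (\<Sum>k | k < s \<and> v k = p. if R k then 1 else - 1 :: int)" for p
  have line_sum: "(\<Sum>p\<in>{p\<in>V. g p = t}. w p) =
      int (card {k. k < s \<and> g (v k) = t \<and> R k}) - int (card {k. k < s \<and> g (v k) = t \<and> \<not> R k})"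
    for g :: "nat \<times> nat \<Rightarrow> nat" and t
  proof -
    have "(\<Sum>p\<in>{p\<in>V. g p = t}. w p) =
        (\<Sum>p\<in>{p\<in>V. g p = t}. \<Sum>k | k \<in> {k. k < s \<and> g (v k) = t} \<and> v k = p. if R k then 1 else - 1)"
      unfolding w_def by (intro sum.cong refl arg_cong[where f = "sum _"]) auto
    also have "\<dots> = (\<Sum>k | k < s \<and> g (v k) = t. if R k then 1 else - 1 :: int)"
      using \<open>finite V\<close> in_V by (intro sum.group) auto
    also have "\<dots> = int (card {k. k < s \<and> g (v k) = t \<and> R k}) - int (card {k. k < s \<and> g (v k) = t \<and> \<not> R k})"
      by (subst sum.If_cases) (auto simp: Int_def Collect_conj_eq[symmetric])
    finally show ?thesis .
  qed
  have "line_balanced V w"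
    unfolding line_balanced_def line_sum
    using card_alternating_split[OF \<open>0 < s\<close> alt, of "\<lambda>k. fst (v k) = _"]
      card_alternating_split[OF \<open>0 < s\<close>, of "\<lambda>k. \<not> R k" "\<lambda>k. snd (v k) = _"]
      alt col_step unfolding R_def by auto
  moreover have "{k. k < s \<and> v k = v 0} = {0}"
    using inj \<open>0 < s\<close> by (auto simp: inj_on_def)
  then have "w (v 0) \<noteq> 0"
    by (simp add: w_def)
  ultimately show ?thesis
    using in_V \<open>0 < s\<close> by blast
qed

lemma sum_last_fibre_eq_0:
  fixes w :: "'a \<Rightarrow> int" and f :: "'a \<Rightarrow> nat"
  assumes "finite A" and "f ` A \<subseteq> {1..m}" and "sum w A = 0"
    and fibres: "\<forall>t\<in>{1..<m}. (\<Sum>a\<in>{a\<in>A. f a = t}. w a) = 0"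
  shows "(\<Sum>a\<in>{a\<in>A. f a = t}. w a) = 0"
proof (cases "t = m")
  case True
  have "sum w A = (\<Sum>t\<in>{1..m}. \<Sum>a\<in>{a\<in>A. f a = t}. w a)"
    by (rule sum.group[OF assms(1) finite_atLeastAtMost assms(2), symmetric])
  also have "\<dots> = (\<Sum>a\<in>{a\<in>A. f a = m}. w a)"
    using fibres assms(2) by (cases m) (simp_all add: atLeastLessThanSuc_atLeastAtMost[symmetric])
  finally show ?thesis
    using \<open>sum w A = 0\<close> True by simp
next
  case False
  show ?thesis
  proof (cases "t \<in> {1..m}")
    case True
    then show ?thesis
      using fibres \<open>t \<noteq> m\<close> by simp
  next
    case False
    then have "{a\<in>A. f a = t} = {}"
      using assms(2) by auto
    then show ?thesis
      by (metis sum.empty)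
  qed
qed

lemma line_balanced_iff_partial_sums:
  assumes "V \<subseteq> grid m n"
  shows "line_balanced V w \<longleftrightarrow> sum w V = 0 \<and>
    (\<forall>t\<in>{1..<m}. (\<Sum>p\<in>{p\<in>V. fst p = t}. w p) = 0) \<and>
    (\<forall>r\<in>{1..<n}. (\<Sum>p\<in>{p\<in>V. snd p = r}. w p) = 0)"
proof -
  have "finite V"
    using assms finite_subset unfolding grid_def by blast
  have lines: "fst ` V \<subseteq> {1..m}" "snd ` V \<subseteq> {1..n}"
    using assms by (auto simp: grid_def)
  have total: "sum w V = (\<Sum>t\<in>{1..m}. \<Sum>p\<in>{p\<in>V. fst p = t}. w p)"
    by (rule sum.group[OF \<open>finite V\<close> finite_atLeastAtMost lines(1), symmetric])
  show ?thesis
  proof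
    assume "line_balanced V w"
    then show "sum w V = 0 \<and> (\<forall>t\<in>{1..<m}. (\<Sum>p\<in>{p\<in>V. fst p = t}. w p) = 0) \<and>
        (\<forall>r\<in>{1..<n}. (\<Sum>p\<in>{p\<in>V. snd p = r}. w p) = 0)"
      unfolding line_balanced_def total by simp
  next
    assume "sum w V = 0 \<and> (\<forall>t\<in>{1..<m}. (\<Sum>p\<in>{p\<in>V. fst p = t}. w p) = 0) \<and>
        (\<forall>r\<in>{1..<n}. (\<Sum>p\<in>{p\<in>V. snd p = r}. w p) = 0)"
    then show "line_balanced V w"
      unfolding line_balanced_def
      using sum_last_fibre_eq_0[OF \<open>finite V\<close> lines(1), of w]
        sum_last_fibre_eq_0[OF \<open>finite V\<close> lines(2), of w] by blast
  qed
qed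

section \<open>Kernel vectors of the structure matrix\<close>

definition point_at :: "nat \<Rightarrow> (nat \<times> nat) set \<Rightarrow> nat \<Rightarrow> nat \<times> nat" where
  "point_at n V k = phi n (sorted_list_of_set (idx_set n V) ! k)"

lemma phi_phi_inv:
  assumes "p \<in> grid m n"
  shows "phi n (phi_inv n p) = p"
proof -
  obtain t r where p: "p = (t, r)" "1 \<le> t" "1 \<le> r" "r \<le> n"
    using assms unfolding grid_def by auto
  then have "phi_inv n p - 1 = (t - 1) * n + (r - 1)"
    by (simp add: phi_inv_def)
  moreover have "r - 1 < n"
    using p by simp
  then have "((t - 1) * n + (r - 1)) div n = t - 1" "((t - 1) * n + (r - 1)) mod n = r - 1"
    by simp_all
  ultimately show ?thesis
    using p by (simp add: phi_def)
qed

lemma bij_betw_point_at: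
  assumes "V \<subseteq> grid m n"
  shows "bij_betw (point_at n V) {..<card V} V"
proof -
  have "bij_betw (phi n) (idx_set n V) V"
    by (rule bij_betw_byWitness[where f' = "phi_inv n"])
      (use assms phi_phi_inv in \<open>force simp: idx_set_def\<close>)+
  moreover have "finite V"
    using assms finite_subset unfolding grid_def by blast
  then have "bij_betw ((!) (sorted_list_of_set (idx_set n V))) {..<card V} (idx_set n V)"
    using bij_betw_same_card[OF \<open>bij_betw (phi n) (idx_set n V) V\<close>]
    by (intro bij_betw_nth) (auto simp: idx_set_def)
  ultimately show ?thesis
    unfolding point_at_def using bij_betw_trans by (auto simp: comp_def)
qed

definition incident :: "nat \<Rightarrow> nat \<Rightarrow> nat \<Rightarrow> nat \<times> nat \<Rightarrow> bool" where
  "incident m n s p \<longleftrightarrow> (s = fst p \<and> fst p < m) \<or> s = m \<or> (s = m + snd p \<and> m + snd p < m + n)"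

lemma structure_matrix_carrier: "structure_matrix m n V \<in> carrier_mat (m + n - 1) (m + n - 1)"
  unfolding structure_matrix_def by simp

lemma structure_matrix_index:
  assumes "s < m + n - 1" and "k < m + n - 1"
  shows "structure_matrix m n V $$ (s, k) = of_bool (incident m n (Suc s) (point_at n V k))"
  using assms unfolding structure_matrix_def incident_def point_at_def by (simp add: Let_def)

lemma structure_matrix_mult_vec:
  assumes "V \<subseteq> grid m n" and "card V = m + n - 1" and "s < m + n - 1"
  shows "(structure_matrix m n V *\<^sub>v vec (m + n - 1) (\<lambda>k. w (point_at n V k))) $ s =
    (\<Sum>p\<in>{p\<in>V. incident m n (Suc s) p}. w p)"
proof -
  have "finite V"
    using assms(1) finite_subset unfolding grid_def by blast
  have "(structure_matrix m n V *\<^sub>v vec (m + n - 1) (\<lambda>k. w (point_at n V k))) $ s =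
      (\<Sum>k<m + n - 1. of_bool (incident m n (Suc s) (point_at n V k)) * w (point_at n V k))"
    using assms(3) structure_matrix_carrier[of m n V]
    by (simp add: scalar_prod_def structure_matrix_index atLeast0LessThan)
  also have "\<dots> = (\<Sum>p\<in>V. of_bool (incident m n (Suc s) p) * w p)"
    using bij_betw_point_at[OF assms(1)] assms(2) by (intro sum.reindex_bij_betw) simp
  also have "\<dots> = (\<Sum>p\<in>V. if incident m n (Suc s) p then w p else 0)"
    by (intro sum.cong) auto
  also have "\<dots> = (\<Sum>p\<in>{p\<in>V. incident m n (Suc s) p}. w p)"
    using \<open>finite V\<close> by (rule sum.inter_filter[symmetric])
  finally show ?thesis .
qed

lemma incident_points:
  assumes "V \<subseteq> grid m n"
  shows incident_points_row: "t < m \<Longrightarrow> {p\<in>V. incident m n t p} = {p\<in>V. fst p = t}"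
    and incident_points_all: "{p\<in>V. incident m n m p} = V"
    and incident_points_col:
      "0 < r \<Longrightarrow> r < n \<Longrightarrow> {p\<in>V. incident m n (m + r) p} = {p\<in>V. snd p = r}"
  using assms by (auto simp: incident_def grid_def)

lemma incident_sums_eq_0_iff:
  assumes "0 < m" and "0 < n" and "V \<subseteq> grid m n"
  shows "(\<forall>s<m + n - 1. (\<Sum>p\<in>{p\<in>V. incident m n (Suc s) p}. w p) = 0) \<longleftrightarrow> line_balanced V w"
  unfolding line_balanced_iff_partial_sums[OF assms(3)]
proof safe
  assume rows: "\<forall>s<m + n - 1. (\<Sum>p\<in>{p\<in>V. incident m n (Suc s) p}. w p) = 0"
  show "sum w V = 0"
    using rows[rule_format, of "m - 1"] assms(1,2) incident_points_all[OF assms(3)] by simp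
  show "(\<Sum>p\<in>{p\<in>V. fst p = t}. w p) = 0" if "t \<in> {1..<m}" for t
  proof -
    have "t - 1 < m + n - 1" "Suc (t - 1) = t"
      using that assms(2) by auto
    then show ?thesis
      using rows incident_points_row[OF assms(3), of t] that by auto
  qed
  show "(\<Sum>p\<in>{p\<in>V. snd p = r}. w p) = 0" if "r \<in> {1..<n}" for r
  proof -
    have "m + r - 1 < m + n - 1" "Suc (m + r - 1) = m + r"
      using that assms(1) by auto
    then show ?thesis
      using rows incident_points_col[OF assms(3), of r] that by auto
  qed
next
  fix s assume "s < m + n - 1" and "sum w V = 0"
    and rows: "\<forall>t\<in>{1..<m}. (\<Sum>p\<in>{p\<in>V. fst p = t}. w p) = 0"
    and cols: "\<forall>r\<in>{1..<n}. (\<Sum>p\<in>{p\<in>V. snd p = r}. w p) = 0"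
  consider "Suc s < m" | "Suc s = m" | "m < Suc s"
    by linarith
  then show "(\<Sum>p\<in>{p\<in>V. incident m n (Suc s) p}. w p) = 0"
  proof cases
    case 3
    define r where "r = Suc s - m"
    have "Suc s = m + r" "r \<in> {1..<n}"
      using 3 \<open>s < m + n - 1\<close> by (auto simp: r_def)
    then show ?thesis
      using incident_points_col[OF assms(3), of r] cols by simp
  qed (use incident_points[OF assms(3)] \<open>sum w V = 0\<close> rows in auto)
qed

lemma structure_matrix_mult_vec_eq_0_iff:
  assumes "0 < m" and "0 < n" and "V \<subseteq> grid m n" and "card V = m + n - 1"
  shows "structure_matrix m n V *\<^sub>v vec (m + n - 1) (\<lambda>k. w (point_at n V k)) = 0\<^sub>v (m + n - 1)
    \<longleftrightarrow> line_balanced V w"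
proof -
  have "structure_matrix m n V *\<^sub>v vec (m + n - 1) (\<lambda>k. w (point_at n V k)) = 0\<^sub>v (m + n - 1) \<longleftrightarrow>
      (\<forall>s<m + n - 1. (\<Sum>p\<in>{p\<in>V. incident m n (Suc s) p}. w p) = 0)"
    using structure_matrix_mult_vec[OF assms(3,4)] structure_matrix_carrier[of m n V]
    by (auto simp: vec_eq_iff)
  then show ?thesis
    using incident_sums_eq_0_iff[OF assms(1-3)] by simp
qed

lemma ex_vec_iff_ex_weight:
  assumes "bij_betw f {..<N} V"
  shows "(\<exists>x. x \<in> carrier_vec N \<and> P x) \<longleftrightarrow> (\<exists>w. P (vec N (\<lambda>k. w (f k))))"
proof
  assume "\<exists>x. x \<in> carrier_vec N \<and> P x"
  then obtain x where "x \<in> carrier_vec N" "P x"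
    by blast
  moreover have "vec N (\<lambda>k. x $ inv_into {..<N} f (f k)) = x"
    using \<open>x \<in> carrier_vec N\<close> assms by (auto simp: vec_eq_iff bij_betw_def inv_into_f_f)
  ultimately show "\<exists>w. P (vec N (\<lambda>k. w (f k)))"
    by (intro exI[of _ "\<lambda>p. x $ inv_into {..<N} f p"]) simp
next
  assume "\<exists>w. P (vec N (\<lambda>k. w (f k)))"
  then show "\<exists>x. x \<in> carrier_vec N \<and> P x"
    by (blast intro: vec_carrier)
qed

lemma det_structure_matrix_eq_0_iff:
  assumes "0 < m" and "0 < n" and "V \<subseteq> grid m n" and "card V = m + n - 1"
  shows "det (structure_matrix m n V) = 0 \<longleftrightarrow> (\<exists>w. line_balanced V w \<and> (\<exists>p\<in>V. w p \<noteq> 0))"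
proof -
  let ?N = "m + n - 1" and ?A = "structure_matrix m n V"
  have bij: "bij_betw (point_at n V) {..<?N} V"
    using bij_betw_point_at[OF assms(3)] assms(4) by simp
  have vec_ne_0: "vec ?N (\<lambda>k. w (point_at n V k)) \<noteq> 0\<^sub>v ?N \<longleftrightarrow> (\<exists>p\<in>V. w p \<noteq> 0)" for w
  proof -
    have "(\<exists>p\<in>V. w p \<noteq> 0) \<longleftrightarrow> (\<exists>k<?N. w (point_at n V k) \<noteq> 0)"
      using bij_betw_imp_surj_on[OF bij] by force
    then show ?thesis
      by (auto simp: vec_eq_iff)
  qed
  have "det ?A = 0 \<longleftrightarrow> (\<exists>x. x \<in> carrier_vec ?N \<and> x \<noteq> 0\<^sub>v ?N \<and> ?A *\<^sub>v x = 0\<^sub>v ?N)"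
    by (rule det_0_iff_vec_prod_zero[OF structure_matrix_carrier])
  also have "\<dots> \<longleftrightarrow> (\<exists>w. vec ?N (\<lambda>k. w (point_at n V k)) \<noteq> 0\<^sub>v ?N \<and>
      ?A *\<^sub>v vec ?N (\<lambda>k. w (point_at n V k)) = 0\<^sub>v ?N)"
    by (rule ex_vec_iff_ex_weight[OF bij])
  also have "\<dots> \<longleftrightarrow> (\<exists>w. line_balanced V w \<and> (\<exists>p\<in>V. w p \<noteq> 0))"
    using vec_ne_0 structure_matrix_mult_vec_eq_0_iff[OF assms] by blast
  finally show ?thesis .
qed

lemma ex_circuit_iff_det_structure_matrix_eq_0:
  assumes "0 < m" and "0 < n" and "V \<subseteq> grid m n" and "card V = m + n - 1"
  shows "(\<exists>s v. is_circuit_in V s v) \<longleftrightarrow> det (structure_matrix m n V) = 0"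
proof
  have "finite V"
    using assms(3) finite_subset unfolding grid_def by blast
  show "det (structure_matrix m n V) = 0" if "\<exists>s v. is_circuit_in V s v"
    using that line_balanced_weight_of_circuit[OF \<open>finite V\<close>]
    unfolding det_structure_matrix_eq_0_iff[OF assms] by blast
  show "\<exists>s v. is_circuit_in V s v" if singular: "det (structure_matrix m n V) = 0"
  proof -
    obtain w p where "line_balanced V w" "p \<in> V" "w p \<noteq> 0"
      using singular unfolding det_structure_matrix_eq_0_iff[OF assms] by blast
    then show ?thesis
      by (rule circuit_of_line_balanced[OF \<open>finite V\<close>])
  qed
qed

section \<open>Connectivity\<close>

text \<open>Row \<open>m\<close> of \<open>\<AA>(V)\<close> is both the sum of the row indicators and the sum of the column
  indicators of the grid, so these coefficients combine the rows of \<open>\<AA>(V)\<close> into the function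
  \<open>p \<mapsto> u (fst p) + v (snd p)\<close> on the points of \<open>V\<close>.\<close>

definition potential_vec :: "nat \<Rightarrow> nat \<Rightarrow> (nat \<Rightarrow> int) \<Rightarrow> (nat \<Rightarrow> int) \<Rightarrow> int vec" where
  "potential_vec m n u v = vec (m + n - 1) (\<lambda>s.
     if Suc s < m then u (Suc s) - u m
     else if Suc s = m then u m + v n
     else v (Suc s - m) - v n)"

lemma transpose_structure_matrix_mult_vec:
  assumes "V \<subseteq> grid m n" and "card V = m + n - 1" and "k < m + n - 1"
    and "y \<in> carrier_vec (m + n - 1)"
  shows "(transpose_mat (structure_matrix m n V) *\<^sub>v y) $ k =
    (\<Sum>s\<in>{s\<in>{..<m + n - 1}. incident m n (Suc s) (point_at n V k)}. y $ s)"
proof -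
  have "(transpose_mat (structure_matrix m n V) *\<^sub>v y) $ k =
      (\<Sum>s<m + n - 1. of_bool (incident m n (Suc s) (point_at n V k)) * y $ s)"
    using assms(3,4) structure_matrix_carrier[of m n V]
    by (simp add: scalar_prod_def structure_matrix_index atLeast0LessThan)
  also have "\<dots> = (\<Sum>s\<in>{s\<in>{..<m + n - 1}. incident m n (Suc s) (point_at n V k)}. y $ s)"
    by (simp add: Int_def)
  finally show ?thesis .
qed

lemma sum_potential_vec_incident:
  assumes "a \<in> grid m n"
  shows "(\<Sum>s\<in>{s\<in>{..<m + n - 1}. incident m n (Suc s) a}. potential_vec m n u v $ s) =
    u (fst a) + v (snd a)"
  (is "(\<Sum>s\<in>{s\<in>{..<?N}. _}. _) = _")
proof -
  have a: "1 \<le> fst a" "fst a \<le> m" "1 \<le> snd a" "snd a \<le> n"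
    using assms by (auto simp: grid_def)
  show ?thesis
  proof (cases "fst a < m"; cases "snd a < n")
    assume "fst a < m" "snd a < n"
    then have "{s\<in>{..<?N}. incident m n (Suc s) a} = {fst a - 1, m - 1, m + snd a - 1}"
      using a by (auto simp: incident_def)
    moreover have "fst a - 1 \<noteq> m - 1" "fst a - 1 \<noteq> m + snd a - 1" "m - 1 \<noteq> m + snd a - 1"
      using \<open>fst a < m\<close> a by auto
    ultimately show ?thesis
      using \<open>fst a < m\<close> \<open>snd a < n\<close> a by (simp add: potential_vec_def)
  next
    assume "fst a < m" "\<not> snd a < n"
    then have "{s\<in>{..<?N}. incident m n (Suc s) a} = {fst a - 1, m - 1}"
      using a by (auto simp: incident_def)
    moreover have "fst a - 1 \<noteq> m - 1"
      using \<open>fst a < m\<close> a by auto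
    ultimately show ?thesis
      using \<open>fst a < m\<close> \<open>\<not> snd a < n\<close> a by (simp add: potential_vec_def)
  next
    assume "\<not> fst a < m" "snd a < n"
    then have "{s\<in>{..<?N}. incident m n (Suc s) a} = {m - 1, m + snd a - 1}"
      using a by (auto simp: incident_def)
    moreover have "m - 1 \<noteq> m + snd a - 1"
      using a by auto
    ultimately show ?thesis
      using \<open>\<not> fst a < m\<close> \<open>snd a < n\<close> a by (simp add: potential_vec_def)
  next
    assume "\<not> fst a < m" "\<not> snd a < n"
    then have "{s\<in>{..<?N}. incident m n (Suc s) a} = {m - 1}"
      using a by (auto simp: incident_def)
    then show ?thesis
      using \<open>\<not> fst a < m\<close> \<open>\<not> snd a < n\<close> a by (simp add: potential_vec_def)
  qed
qed

lemma det_structure_matrix_eq_0_of_potential: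
  fixes u v :: "nat \<Rightarrow> int"
  assumes "V \<subseteq> grid m n" and "card V = m + n - 1"
    and vanish: "\<forall>a\<in>V. u (fst a) + v (snd a) = 0"
    and "t \<in> {1..m}" and "u t \<noteq> u m"
  shows "det (structure_matrix m n V) = 0"
proof -
  let ?N = "m + n - 1" and ?A = "structure_matrix m n V" and ?y = "potential_vec m n u v"
  have "?y \<in> carrier_vec ?N"
    by (simp add: potential_vec_def)
  have "transpose_mat ?A *\<^sub>v ?y = 0\<^sub>v ?N"
  proof (rule eq_vecI)
    fix k assume "k < dim_vec (0\<^sub>v ?N :: int vec)"
    then have "k < ?N"
      by simp
    then have "point_at n V k \<in> V"
      using bij_betw_point_at[OF assms(1)] assms(2) unfolding bij_betw_def by auto
    then show "(transpose_mat ?A *\<^sub>v ?y) $ k = 0\<^sub>v ?N $ k"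
      using transpose_structure_matrix_mult_vec[OF assms(1,2) \<open>k < ?N\<close> \<open>?y \<in> carrier_vec ?N\<close>]
        sum_potential_vec_incident[of "point_at n V k" m n u v] assms(1) vanish \<open>k < ?N\<close>
      by auto
  qed (simp add: carrier_matD[OF structure_matrix_carrier] potential_vec_def)
  moreover have "t < m"
    using \<open>t \<in> {1..m}\<close> \<open>u t \<noteq> u m\<close> by (cases "t = m") auto
  then have "t - 1 < ?N" "?y $ (t - 1) = u t - u m"
    using \<open>t \<in> {1..m}\<close> by (auto simp: potential_vec_def)
  then have "?y \<noteq> 0\<^sub>v ?N"
    using \<open>u t \<noteq> u m\<close> by auto
  ultimately have "det (transpose_mat ?A) = 0"
    using det_0_iff_vec_prod_zero[OF transpose_carrier_mat[THEN iffD2, OF structure_matrix_carrier]]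
      \<open>?y \<in> carrier_vec ?N\<close> by blast
  then show ?thesis
    using det_transpose[OF structure_matrix_carrier] by simp
qed

definition reach :: "(nat \<times> nat) set \<Rightarrow> nat \<times> nat \<Rightarrow> nat \<times> nat \<Rightarrow> bool" where
  "reach V p q \<longleftrightarrow> (\<exists>xs. xs \<noteq> [] \<and> hd xs = p \<and> last xs = q \<and>
     set xs \<subseteq> V \<and> (\<forall>i. Suc i < length xs \<longrightarrow> adjacent (xs ! i) (xs ! Suc i)))"

lemma connected_set_iff_reach: "connected_set V \<longleftrightarrow> (\<forall>p\<in>V. \<forall>q\<in>V. reach V p q)"
  unfolding connected_set_def reach_def ..

lemma reach_refl: "p \<in> V \<Longrightarrow> reach V p p"
  unfolding reach_def by (rule exI[of _ "[p]"]) simp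

lemma reach_snoc:
  assumes "reach V p z" and "y \<in> V" and "adjacent z y"
  shows "reach V p y"
proof -
  obtain xs where xs: "xs \<noteq> []" "hd xs = p" "last xs = z" "set xs \<subseteq> V"
    and path: "\<forall>i. Suc i < length xs \<longrightarrow> adjacent (xs ! i) (xs ! Suc i)"
    using assms(1) unfolding reach_def by blast
  have "adjacent ((xs @ [y]) ! i) ((xs @ [y]) ! Suc i)" if "Suc i < length (xs @ [y])" for i
  proof (cases "Suc i < length xs")
    case True
    then show ?thesis
      using path by (simp add: nth_append)
  next
    case False
    with that have "Suc i = length xs" "i = length xs - 1"
      by simp_all
    then show ?thesis
      using xs(1,3) \<open>adjacent z y\<close> by (simp add: nth_append last_conv_nth)
  qed
  then show ?thesis
    unfolding reach_def using xs \<open>y \<in> V\<close> by (intro exI[of _ "xs @ [y]"]) auto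
qed

lemma reach_line:
  assumes "reach V p z" and "y \<in> V" and "fst y = fst z \<or> snd y = snd z"
  shows "reach V p y"
proof (cases "y = z")
  case False
  with assms(3) have "adjacent z y"
    unfolding adjacent_def by auto
  with assms(1,2) show ?thesis
    by (rule reach_snoc)
qed (use assms in simp)

lemma connected_set_of_det_ne_0:
  assumes "V \<subseteq> grid m n" and "card V = m + n - 1"
    and "det (structure_matrix m n V) \<noteq> 0"
  shows "connected_set V"
proof (rule ccontr)
  assume "\<not> connected_set V"
  then obtain p q where "p \<in> V" "q \<in> V" "\<not> reach V p q"
    unfolding connected_set_iff_reach by blast
  define C where "C = {z\<in>V. reach V p z}"
  have closed: "a \<in> C" if "a \<in> V" "z \<in> C" "fst a = fst z \<or> snd a = snd z" for a z
    using that reach_line unfolding C_def by blast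
  define u :: "nat \<Rightarrow> int" where "u t = of_bool (\<exists>z\<in>C. fst z = t)" for t
  define v :: "nat \<Rightarrow> int" where "v r = - of_bool (\<exists>z\<in>C. snd z = r)" for r
  have "u (fst a) + v (snd a) = 0" if "a \<in> V" for a
  proof (cases "a \<in> C")
    case True
    then show ?thesis
      by (auto simp: u_def v_def)
  next
    case False
    then have "\<not> (\<exists>z\<in>C. fst z = fst a)" "\<not> (\<exists>z\<in>C. snd z = snd a)"
      using closed[OF that] by metis+
    then show ?thesis
      by (simp add: u_def v_def)
  qed
  moreover have "p \<in> C"
    using \<open>p \<in> V\<close> reach_refl unfolding C_def by blast
  then have "u (fst p) = 1"
    unfolding u_def by auto
  moreover have "q \<notin> C"
    using \<open>\<not> reach V p q\<close> unfolding C_def by blast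
  then have "\<not> (\<exists>z\<in>C. fst z = fst q)"
    using closed[OF \<open>q \<in> V\<close>] by metis
  then have "u (fst q) = 0"
    unfolding u_def by simp
  moreover have "fst p \<in> {1..m}" "fst q \<in> {1..m}"
    using \<open>p \<in> V\<close> \<open>q \<in> V\<close> assms(1) by (auto simp: grid_def)
  ultimately have "det (structure_matrix m n V) = 0"
    using det_structure_matrix_eq_0_of_potential[OF assms(1,2)]
    by (metis one_neq_zero)
  with assms(3) show False
    by contradiction
qed

theorem theorem3p1:
  fixes m n :: nat and V :: "(nat \<times> nat) set"
  assumes "m \<ge> 2" and "n \<ge> 2"
    and "V \<subseteq> grid m n" and "card V = m + n - 1"
  shows "is_tree V \<longleftrightarrow> det (structure_matrix m n V) \<noteq> 0"
proof -
  have "(\<exists>s v. is_circuit_in V s v) \<longleftrightarrow> det (structure_matrix m n V) = 0"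
    using assms by (intro ex_circuit_iff_det_structure_matrix_eq_0) simp_all
  moreover have "det (structure_matrix m n V) \<noteq> 0 \<Longrightarrow> connected_set V"
    using assms(3,4) by (rule connected_set_of_det_ne_0)
  ultimately show ?thesis
    unfolding is_tree_def by blast
qed

end
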